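(* Let $G$ be a connected unicyclic bipartite graph with $n$ vertices. Then $$EE(G) \ge 2\cosh(2) + (n-2),$$ with equality if and only if $G\cong C_4$.
   Context: All graphs are finite, simple and undirected. For a graph $G$ with adjacency matrix $A(G)$ having eigenvalues $\lambda_1\ge\cdots\ge\lambda_n$, the Estrada index is $EE(G)=\sum_{i=1}^n e^{\lambda_i}$. A connected graph is unicyclic if it contains exactly one cycle. $C_4$ is the cycle on 4 vertices. *)

theory Defs
  imports Complex_Main "Jordan_Normal_Form.Char_Poly"
    "HOL-Computational_Algebra.Fundamental_Theorem_Algebra"
begin

definition simple_graph :: "nat \<Rightarrow> (nat \<Rightarrow> nat \<Rightarrow> bool) \<Rightarrow> bool" where
  "simple_graph n E \<longleftrightarrow> (\<forall>i j. E i j \<longrightarrow> i < n \<and> j < n \<and> i \<noteq> j \<and> E j i)"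

definition graph_connected :: "nat \<Rightarrow> (nat \<Rightarrow> nat \<Rightarrow> bool) \<Rightarrow> bool" where
  "graph_connected n E \<longleftrightarrow> 0 < n \<and> (\<forall>i<n. \<forall>j<n. E\<^sup>*\<^sup>* i j)"

definition is_cycle :: "nat \<Rightarrow> (nat \<Rightarrow> nat \<Rightarrow> bool) \<Rightarrow> nat list \<Rightarrow> bool" where
  "is_cycle n E vs \<longleftrightarrow> length vs \<ge> 3 \<and> distinct vs \<and> set vs \<subseteq> {0..<n} \<and>
     (\<forall>i<length vs. E (vs ! i) (vs ! ((i + 1) mod length vs)))"

text \<open>The cycle as a subgraph is identified with its edge set
  (so rotations/reversals of the vertex list give the same cycle).\<close>
definition cycle_edges :: "nat list \<Rightarrow> nat set set" where
  "cycle_edges vs = {{vs ! i, vs ! ((i + 1) mod length vs)} | i. i < length vs}"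

definition graph_cycles :: "nat \<Rightarrow> (nat \<Rightarrow> nat \<Rightarrow> bool) \<Rightarrow> nat set set set" where
  "graph_cycles n E = {cycle_edges vs | vs. is_cycle n E vs}"

definition unicyclic :: "nat \<Rightarrow> (nat \<Rightarrow> nat \<Rightarrow> bool) \<Rightarrow> bool" where
  "unicyclic n E \<longleftrightarrow> graph_connected n E \<and> card (graph_cycles n E) = 1"

definition bipartite :: "nat \<Rightarrow> (nat \<Rightarrow> nat \<Rightarrow> bool) \<Rightarrow> bool" where
  "bipartite n E \<longleftrightarrow> (\<exists>f :: nat \<Rightarrow> bool. \<forall>i<n. \<forall>j<n. E i j \<longrightarrow> f i \<noteq> f j)"

definition C4 :: "nat \<Rightarrow> nat \<Rightarrow> bool" where
  "C4 a b \<longleftrightarrow> a < 4 \<and> b < 4 \<and> ((a + 1) mod 4 = b \<or> (b + 1) mod 4 = a)"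

definition isomorphic_C4 :: "nat \<Rightarrow> (nat \<Rightarrow> nat \<Rightarrow> bool) \<Rightarrow> bool" where
  "isomorphic_C4 n E \<longleftrightarrow> n = 4 \<and>
     (\<exists>p. bij_betw p {0..<4} {0..<4} \<and> (\<forall>i<4. \<forall>j<4. E i j \<longleftrightarrow> C4 (p i) (p j)))"

definition adj_matrix :: "nat \<Rightarrow> (nat \<Rightarrow> nat \<Rightarrow> bool) \<Rightarrow> real mat" where
  "adj_matrix n E = mat n n (\<lambda>(i, j). if E i j then 1 else 0)"

text \<open>Eigenvalues with algebraic multiplicity = roots of the characteristic polynomial
  (taken over the complex numbers; for the symmetric adjacency matrix they are all real).\<close>
definition eigenvalues_mset :: "real mat \<Rightarrow> complex multiset" where
  "eigenvalues_mset A = proots (char_poly (map_mat complex_of_real A))"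

definition estrada_index :: "nat \<Rightarrow> (nat \<Rightarrow> nat \<Rightarrow> bool) \<Rightarrow> real" where
  "estrada_index n E = Re (\<Sum>z\<in>#eigenvalues_mset (adj_matrix n E). exp z)"

end

theory Submission
  imports Defs "Jordan_Normal_Form.Schur_Decomposition" "HOL-Analysis.Convex"
begin

text \<open>The adjacency eigenvalues \<open>\<lambda>\<^sub>1, \<dots>, \<lambda>\<^sub>n\<close> of \<open>G\<close> are real, \<open>\<Sum> \<lambda>\<^sub>i = tr A = 0\<close> and
  \<open>\<Sum> \<lambda>\<^sub>i\<^sup>2 = tr A\<^sup>2 = 2m\<close>, where \<open>m \<ge> n\<close> because a connected graph containing a cycle has
  at least as many edges as vertices. The Rayleigh quotients of the all-ones vector and of the
  \<open>\<plusminus>1\<close> vector of a bipartition give eigenvalues \<open>\<lambda>\<^sub>a \<ge> 2m/n \<ge> 2\<close> and \<open>\<lambda>\<^sub>b \<le> -2m/n \<le> -2\<close>.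
  Since \<open>exp x - x\<close> lies above its tangents at \<open>\<plusminus>2\<close> and \<open>exp x \<ge> 1 + x\<close>, using \<open>\<Sum> \<lambda>\<^sub>i = 0\<close>,
  \<open>\<Sum> exp \<lambda>\<^sub>i \<ge> (exp 2 - 2 + \<lambda>\<^sub>a) + (exp (-2) + 2 + \<lambda>\<^sub>b) + \<Sum>\<^bsub>i \<noteq> a, b\<^esub> (1 + \<lambda>\<^sub>i)\<close>
  \<open>= 2 cosh 2 + n - 2\<close>.
  Equality forces the spectrum \<open>2, -2, 0, \<dots>, 0\<close>, hence \<open>2m = 8\<close>, so \<open>n = m = 4\<close> and \<open>G \<cong> C\<^sub>4\<close>.

  The Rayleigh bound is obtained from traces alone, without diagonalising: by Cauchy--Schwarz,
  \<open>(x\<^sup>T M x / |x|\<^sup>2)\<^bsup>2^t\<^esup> \<le> tr M\<^bsup>2^t\<^esup> = \<Sum> \<lambda>\<^sub>i\<^bsup>2^t\<^esup>\<close> for every \<open>t\<close>, and letting \<open>t \<rightarrow> \<infinity>\<close>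
  yields an eigenvalue with \<open>|\<lambda>\<^sub>i| \<ge> |x\<^sup>T M x| / |x|\<^sup>2\<close>; shifting \<open>M\<close> by a multiple of the
  identity turns this into one-sided bounds. The traces of powers are computed from a Schur
  triangularisation.\<close>

section \<open>Traces of matrix powers\<close>

definition mat_trace :: "'a::comm_ring_1 mat \<Rightarrow> 'a" where
  "mat_trace M = (\<Sum>i\<in>{0..<dim_row M}. M $$ (i,i))"

lemma mat_trace_mult_comm:
  fixes A B :: "'a::comm_ring_1 mat"
  assumes A: "A \<in> carrier_mat n m" and B: "B \<in> carrier_mat m n"
  shows "mat_trace (A * B) = mat_trace (B * A)"
proof -
  have "mat_trace (A * B) = (\<Sum>i\<in>{0..<n}. \<Sum>k\<in>{0..<m}. A $$ (i,k) * B $$ (k,i))"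
    using A B unfolding mat_trace_def by (simp add: scalar_prod_def)
  also have "\<dots> = (\<Sum>k\<in>{0..<m}. \<Sum>i\<in>{0..<n}. B $$ (k,i) * A $$ (i,k))"
    by (subst sum.swap) (simp add: mult.commute)
  also have "\<dots> = mat_trace (B * A)"
    using A B unfolding mat_trace_def by (simp add: scalar_prod_def)
  finally show ?thesis .
qed

lemma mat_trace_similar_pow:
  fixes A :: "'a::comm_ring_1 mat"
  assumes "similar_mat_wit A B P Q"
  shows "mat_trace (A ^\<^sub>m N) = mat_trace (B ^\<^sub>m N)"
proof -
  define n where "n = dim_row A"
  note wit = similar_mat_witD[OF n_def assms]
  have BN: "B ^\<^sub>m N \<in> carrier_mat n n" using wit by simp
  have "mat_trace (A ^\<^sub>m N) = mat_trace (P * B ^\<^sub>m N * Q)"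
    by (simp add: similar_mat_wit_pow_id[OF assms])
  also have "\<dots> = mat_trace (Q * (P * B ^\<^sub>m N))"
    using wit BN by (intro mat_trace_mult_comm[of _ n n]) auto
  also have "Q * (P * B ^\<^sub>m N) = B ^\<^sub>m N"
    using wit BN by (simp flip: assoc_mult_mat[OF _ _ BN])
  finally show ?thesis .
qed

lemma similar_mat_wit_shift:
  fixes A :: "'a::comm_ring_1 mat"
  assumes "similar_mat_wit A B P Q" and A: "A \<in> carrier_mat n n"
  shows "similar_mat_wit (A + c \<cdot>\<^sub>m 1\<^sub>m n) (B + c \<cdot>\<^sub>m 1\<^sub>m n) P Q"
proof -
  note wit = similar_mat_witD2[OF A assms(1)]
  have "P * (B + c \<cdot>\<^sub>m 1\<^sub>m n) = P * B + c \<cdot>\<^sub>m P"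
    using wit by (simp add: mult_add_distrib_mat[of _ n n] mult_smult_distrib[of P n n "1\<^sub>m n" n])
  then have "P * (B + c \<cdot>\<^sub>m 1\<^sub>m n) * Q = P * B * Q + c \<cdot>\<^sub>m (P * Q)"
    using wit by (simp add: add_mult_distrib_mat[of _ n n] mult_smult_assoc_mat[of _ n n])
  then show ?thesis
    using wit by (intro similar_mat_witI[of P Q n]) auto
qed

lemma upper_triangular_mult:
  fixes U V :: "'a::comm_ring_1 mat"
  assumes U: "U \<in> carrier_mat n n" and V: "V \<in> carrier_mat n n"
    and uU: "upper_triangular U" and uV: "upper_triangular V"
  shows "upper_triangular (U * V)"
    and "\<And>i. i < n \<Longrightarrow> (U * V) $$ (i,i) = U $$ (i,i) * V $$ (i,i)"
proof -
  have zero: "U $$ (i,k) * V $$ (k,j) = 0" if "i < n" "k < n" "j < i \<or> (j = i \<and> k \<noteq> i)" for i j k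
  proof (cases "k < i")
    case True then show ?thesis using uU U \<open>i < n\<close> by (simp add: upper_triangularD)
  next
    case False then have "j < k" using that by auto
    then show ?thesis using uV V \<open>k < n\<close> by (simp add: upper_triangularD)
  qed
  show "upper_triangular (U * V)"
    using U V zero by (intro upper_triangularI) (auto simp: scalar_prod_def intro!: sum.neutral)
  fix i assume i: "i < n"
  have "(U * V) $$ (i,i) = (\<Sum>k\<in>{0..<n}. U $$ (i,k) * V $$ (k,i))"
    using U V i by (simp add: scalar_prod_def)
  also have "\<dots> = U $$ (i,i) * V $$ (i,i)"
    using i zero[of i] by (subst sum.remove[of _ i]) (auto intro!: sum.neutral)
  finally show "(U * V) $$ (i,i) = U $$ (i,i) * V $$ (i,i)" .
qed

lemma upper_triangular_pow_mat:
  fixes U :: "'a::comm_ring_1 mat"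
  assumes U: "U \<in> carrier_mat n n" and uU: "upper_triangular U"
  shows "upper_triangular (U ^\<^sub>m N) \<and> (\<forall>i<n. (U ^\<^sub>m N) $$ (i,i) = U $$ (i,i) ^ N)"
proof (induction N)
  case (Suc N)
  have "U ^\<^sub>m N \<in> carrier_mat n n" using U by simp
  note step = upper_triangular_mult[OF this U _ uU]
  show ?case using Suc step by (simp add: mult.commute)
qed (use U in simp)

lemma mat_trace_upper_triangular_pow:
  fixes U :: "'a::comm_ring_1 mat"
  assumes U: "U \<in> carrier_mat n n" and "upper_triangular U"
  shows "mat_trace (U ^\<^sub>m N) = (\<Sum>u\<leftarrow>diag_mat U. u ^ N)"
  using upper_triangular_pow_mat[OF assms, of N] U
  by (simp add: mat_trace_def diag_mat_def sum_list_sum_nth atLeast0LessThan)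

lemma mat_trace_shift_pow_char_poly:
  fixes A :: "complex mat"
  assumes A: "A \<in> carrier_mat n n" and cp: "char_poly A = (\<Prod>e\<leftarrow>es. [:- e, 1:])"
  shows "mat_trace ((A + c \<cdot>\<^sub>m 1\<^sub>m n) ^\<^sub>m N) = (\<Sum>e\<leftarrow>es. (e + c) ^ N)"
proof -
  obtain B P Q where "schur_decomposition A es = (B,P,Q)"
    by (cases "schur_decomposition A es") auto
  from schur_decomposition[OF A cp this]
  have wit: "similar_mat_wit A B P Q" and ut: "upper_triangular B" and dg: "diag_mat B = es"
    by auto
  have B: "B \<in> carrier_mat n n" using similar_mat_witD2[OF A wit] by simp
  have "upper_triangular (B + c \<cdot>\<^sub>m 1\<^sub>m n)" using ut B by (auto simp: upper_triangular_def)
  moreover have "diag_mat (B + c \<cdot>\<^sub>m 1\<^sub>m n) = map (\<lambda>e. e + c) es"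
    using B dg by (auto simp: diag_mat_def)
  ultimately show ?thesis
    using B mat_trace_similar_pow[OF similar_mat_wit_shift[OF wit A]]
    by (simp add: mat_trace_upper_triangular_pow[of _ n] o_def)
qed

lemma pow_mat_add:
  fixes M :: "'a::comm_ring_1 mat"
  assumes M: "M \<in> carrier_mat n n"
  shows "M ^\<^sub>m (a + b) = M ^\<^sub>m a * M ^\<^sub>m b"
proof (induction b)
  case (Suc b)
  have "M ^\<^sub>m (a + Suc b) = (M ^\<^sub>m a * M ^\<^sub>m b) * M" using Suc by simp
  also have "\<dots> = M ^\<^sub>m a * (M ^\<^sub>m b * M)"
    using M by (intro assoc_mult_mat[of _ n n _ n _ n]) auto
  finally show ?case by simp
qed (use M in simp)

lemma transpose_pow_mat:
  fixes M :: "'a::comm_ring_1 mat"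
  assumes M: "M \<in> carrier_mat n n"
  shows "(M ^\<^sub>m k)\<^sup>T = (M\<^sup>T) ^\<^sub>m k"
proof (induction k)
  case (Suc k)
  have "(M ^\<^sub>m Suc k)\<^sup>T = M\<^sup>T * (M\<^sup>T) ^\<^sub>m k"
    using M Suc by (simp add: transpose_mult[of _ n n _ n])
  also have "\<dots> = (M\<^sup>T) ^\<^sub>m Suc k"
    using pow_mat_add[of "M\<^sup>T" n 1 k] M by simp
  finally show ?case .
qed (use M in simp)

section \<open>Real symmetric matrices\<close>

lemma symmetric_mat_index:
  assumes "A\<^sup>T = A" "A \<in> carrier_mat n n" "i < n" "j < n"
  shows "A $$ (i,j) = A $$ (j,i)"
  by (metis assms index_transpose_mat(1) carrier_matD)

lemma real_symmetric_char_poly_root_real: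
  fixes A :: "real mat"
  assumes A: "A \<in> carrier_mat n n" and sym: "A\<^sup>T = A"
    and root: "poly (char_poly (map_mat complex_of_real A)) e = 0"
  shows "e \<in> \<real>"
proof -
  let ?A = "map_mat complex_of_real A"
  have Ac: "?A \<in> carrier_mat n n" using A by simp
  have "eigenvalue ?A e" using eigenvalue_root_char_poly[OF Ac] root by simp
  then obtain v where "eigenvector ?A v e" unfolding eigenvalue_def by auto
  then have v: "v \<in> carrier_vec n" and v0: "v \<noteq> 0\<^sub>v n" and Av: "?A *\<^sub>v v = e \<cdot>\<^sub>v v"
    using Ac unfolding eigenvector_def by auto
  have row: "(\<Sum>j\<in>{0..<n}. of_real (A $$ (i,j)) * v $ j) = e * v $ i" if "i < n" for i
    using arg_cong[OF Av, of "\<lambda>w. w $ i"] that A v by (simp add: scalar_prod_def)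
  define S where "S = (\<Sum>i\<in>{0..<n}. \<Sum>j\<in>{0..<n}. cnj (v $ i) * of_real (A $$ (i,j)) * v $ j)"
  define K where "K = (\<Sum>i\<in>{0..<n}. (cmod (v $ i))\<^sup>2)"
  have "S = (\<Sum>i\<in>{0..<n}. cnj (v $ i) * (e * v $ i))"
    unfolding S_def by (intro sum.cong refl) (simp add: row mult.assoc flip: sum_distrib_left)
  also have "\<dots> = e * of_real K"
    unfolding K_def of_real_sum sum_distrib_left
    by (intro sum.cong refl) (simp add: complex_norm_square mult_ac del: of_real_power)
  finally have S: "S = e * of_real K" .
  \<comment> \<open>the quadratic form of a real symmetric matrix is self-conjugate\<close>
  have "cnj S = (\<Sum>j\<in>{0..<n}. \<Sum>i\<in>{0..<n}. cnj (v $ j) * of_real (A $$ (j,i)) * v $ i)"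
    unfolding S_def by (subst sum.swap)
      (auto intro!: sum.cong simp: symmetric_mat_index[OF sym A] mult_ac)
  then have "cnj S = S" unfolding S_def by simp
  moreover have "K > 0"
  proof -
    obtain i where "i < n" "v $ i \<noteq> 0" using v v0 by (metis eq_vecI carrier_vecD index_zero_vec)
    then have "(cmod (v $ i))\<^sup>2 \<le> K" "(cmod (v $ i))\<^sup>2 > 0"
      unfolding K_def by (auto intro: member_le_sum)
    then show ?thesis by linarith
  qed
  ultimately have "cnj e = e" using S by simp
  then show ?thesis by (metis Reals_cnj_iff)
qed

text \<open>\<open>l 0, \<dots>, l (n - 1)\<close> is the spectrum of \<open>M\<close> as far as the traces of powers of the shifts
  \<open>M + c I\<close> can detect it.\<close>

definition has_trace_spectrum :: "nat \<Rightarrow> real mat \<Rightarrow> (nat \<Rightarrow> real) \<Rightarrow> bool" where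
  "has_trace_spectrum n M l \<longleftrightarrow>
     (\<forall>c N. mat_trace ((M + c \<cdot>\<^sub>m 1\<^sub>m n) ^\<^sub>m N) = (\<Sum>i\<in>{0..<n}. (l i + c) ^ N))"

lemma proots_linear_factors: "proots (\<Prod>e\<leftarrow>es. [:- e, 1:]) = mset (es :: complex list)"
proof -
  have "0 \<notin> set (map (\<lambda>e. [:- e, 1:]) es)" by auto
  then have "proots (\<Prod>e\<leftarrow>es. [:- e, 1:]) = (\<Sum>e\<leftarrow>es. proots [:- e, 1:])"
    using proots_prod_list[of "map (\<lambda>e. [:- e, 1:]) es"] by (simp add: o_def)
  also have "\<dots> = mset es" by (induction es) auto
  finally show ?thesis .
qed

lemma real_symmetric_trace_spectrum:
  fixes A :: "real mat"
  assumes A: "A \<in> carrier_mat n n" and sym: "A\<^sup>T = A"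
  obtains l where "proots (char_poly (map_mat complex_of_real A)) = mset (map (\<lambda>i. of_real (l i)) [0..<n])"
    and "has_trace_spectrum n A l"
proof -
  let ?A = "map_mat complex_of_real A"
  have Ac: "?A \<in> carrier_mat n n" using A by simp
  obtain es where cp: "char_poly ?A = (\<Prod>e\<leftarrow>es. [:- e, 1:])" and len: "length es = n"
    using char_poly_factorized[OF Ac] by auto
  define l where "l i = Re (es ! i)" for i
  have es: "es = map (\<lambda>i. of_real (l i)) [0..<n]"
  proof (rule nth_equalityI)
    fix i assume "i < length es"
    then have "poly (char_poly ?A) (es ! i) = 0"
      unfolding cp by (simp add: poly_prod_list)
    then have "es ! i \<in> \<real>" by (rule real_symmetric_char_poly_root_real[OF A sym])
    then show "es ! i = map (\<lambda>i. of_real (l i)) [0..<n] ! i"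
      using \<open>i < length es\<close> len by (simp add: l_def Reals_cases)
  qed (simp add: len)
  have trace: "mat_trace ((A + c \<cdot>\<^sub>m 1\<^sub>m n) ^\<^sub>m N) = (\<Sum>i\<in>{0..<n}. (l i + c) ^ N)" for c N
  proof -
    have "of_real (mat_trace ((A + c \<cdot>\<^sub>m 1\<^sub>m n) ^\<^sub>m N))
        = mat_trace (map_mat complex_of_real ((A + c \<cdot>\<^sub>m 1\<^sub>m n) ^\<^sub>m N))"
      using A by (simp add: mat_trace_def)
    also have "map_mat complex_of_real ((A + c \<cdot>\<^sub>m 1\<^sub>m n) ^\<^sub>m N) = (?A + of_real c \<cdot>\<^sub>m 1\<^sub>m n) ^\<^sub>m N"
      using A by (subst of_real_hom.mat_hom_pow[of _ n]) (auto intro!: arg_cong[of _ _ "\<lambda>M. M ^\<^sub>m N"])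
    also have "mat_trace \<dots> = (\<Sum>e\<leftarrow>es. (e + of_real c) ^ N)"
      by (rule mat_trace_shift_pow_char_poly[OF Ac cp])
    also have "\<dots> = of_real (\<Sum>i\<in>{0..<n}. (l i + c) ^ N)"
      by (simp add: es sum_list_sum_nth atLeast0LessThan)
    finally show ?thesis by (simp only: of_real_eq_iff)
  qed
  have "proots (char_poly ?A) = mset (map (\<lambda>i. of_real (l i)) [0..<n])"
    using cp es by (simp only: proots_linear_factors)
  then show ?thesis using that trace unfolding has_trace_spectrum_def by blast
qed

section \<open>Rayleigh quotients from power traces\<close>

definition quad_form :: "nat \<Rightarrow> real mat \<Rightarrow> (nat \<Rightarrow> real) \<Rightarrow> real" where
  "quad_form n M x = (\<Sum>i\<in>{0..<n}. \<Sum>j\<in>{0..<n}. x i * M $$ (i,j) * x j)"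

lemma quad_form_shift:
  assumes "M \<in> carrier_mat n n"
  shows "quad_form n (M + c \<cdot>\<^sub>m 1\<^sub>m n) x = quad_form n M x + c * (\<Sum>i\<in>{0..<n}. (x i)\<^sup>2)"
proof -
  have "quad_form n (M + c \<cdot>\<^sub>m 1\<^sub>m n) x
      = (\<Sum>i\<in>{0..<n}. \<Sum>j\<in>{0..<n}. x i * M $$ (i,j) * x j + (if i = j then c * (x i)\<^sup>2 else 0))"
    unfolding quad_form_def using assms
    by (intro sum.cong refl) (auto simp: algebra_simps power2_eq_square)
  then show ?thesis by (simp add: quad_form_def sum.distrib sum_distrib_left)
qed

lemma quad_form_mult_self:
  assumes W: "W \<in> carrier_mat n n" and sym: "W\<^sup>T = W"
  shows "quad_form n (W * W) x = (\<Sum>l\<in>{0..<n}. (\<Sum>j\<in>{0..<n}. W $$ (l,j) * x j)\<^sup>2)"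
proof -
  have "quad_form n (W * W) x
      = (\<Sum>i\<in>{0..<n}. \<Sum>j\<in>{0..<n}. \<Sum>l\<in>{0..<n}. (W $$ (l,i) * x i) * (W $$ (l,j) * x j))"
    unfolding quad_form_def using W
    by (intro sum.cong refl)
      (simp add: scalar_prod_def sum_distrib_left sum_distrib_right symmetric_mat_index[OF sym W] mult_ac)
  also have "\<dots> = (\<Sum>i\<in>{0..<n}. \<Sum>l\<in>{0..<n}. \<Sum>j\<in>{0..<n}. (W $$ (l,i) * x i) * (W $$ (l,j) * x j))"
    by (intro sum.cong refl sum.swap)
  also have "\<dots> = (\<Sum>l\<in>{0..<n}. \<Sum>i\<in>{0..<n}. \<Sum>j\<in>{0..<n}. (W $$ (l,i) * x i) * (W $$ (l,j) * x j))"
    by (rule sum.swap)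
  also have "\<dots> = (\<Sum>l\<in>{0..<n}. (\<Sum>j\<in>{0..<n}. W $$ (l,j) * x j)\<^sup>2)"
    by (simp add: power2_eq_square sum_product)
  finally show ?thesis .
qed

lemma quad_form_square_le:
  assumes "W \<in> carrier_mat n n" and "W\<^sup>T = W"
  shows "(quad_form n W x)\<^sup>2 \<le> (\<Sum>i\<in>{0..<n}. (x i)\<^sup>2) * quad_form n (W * W) x"
proof -
  have "quad_form n W x = (\<Sum>l\<in>{0..<n}. x l * (\<Sum>j\<in>{0..<n}. W $$ (l,j) * x j))"
    unfolding quad_form_def by (simp add: sum_distrib_left mult_ac)
  then show ?thesis
    unfolding quad_form_mult_self[OF assms] by (simp add: Cauchy_Schwarz_ineq_sum)
qed

lemma quad_form_mult_self_le_trace: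
  assumes W: "W \<in> carrier_mat n n" and sym: "W\<^sup>T = W"
  shows "quad_form n (W * W) x \<le> mat_trace (W * W) * (\<Sum>i\<in>{0..<n}. (x i)\<^sup>2)"
proof -
  have "quad_form n (W * W) x \<le> (\<Sum>l\<in>{0..<n}. (\<Sum>j\<in>{0..<n}. (W $$ (l,j))\<^sup>2) * (\<Sum>j\<in>{0..<n}. (x j)\<^sup>2))"
    unfolding quad_form_mult_self[OF W sym] by (intro sum_mono Cauchy_Schwarz_ineq_sum)
  also have "\<dots> = mat_trace (W * W) * (\<Sum>i\<in>{0..<n}. (x i)\<^sup>2)"
    using W by (simp add: mat_trace_def scalar_prod_def sum_distrib_right power2_eq_square
        symmetric_mat_index[OF sym W])
  finally show ?thesis .
qed

lemma rayleigh_power_le_trace: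
  assumes M: "M \<in> carrier_mat n n" and sym: "M\<^sup>T = M"
    and X: "0 < (\<Sum>i\<in>{0..<n}. (x i)\<^sup>2)"
  shows "(\<bar>quad_form n M x\<bar> / (\<Sum>i\<in>{0..<n}. (x i)\<^sup>2)) ^ (2 ^ Suc t) \<le> mat_trace (M ^\<^sub>m (2 ^ Suc t))"
proof -
  define X where "X = (\<Sum>i\<in>{0..<n}. (x i)\<^sup>2)"
  define q where "q = \<bar>quad_form n M x\<bar> / X"
  define b where "b t = quad_form n (M ^\<^sub>m (2 ^ t)) x / X" for t
  have W: "M ^\<^sub>m (2 ^ t) \<in> carrier_mat n n" "(M ^\<^sub>m (2 ^ t))\<^sup>T = M ^\<^sub>m (2 ^ t)" for t
    using M sym by (auto simp: transpose_pow_mat)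
  have WW: "M ^\<^sub>m (2 ^ t) * M ^\<^sub>m (2 ^ t) = M ^\<^sub>m (2 ^ Suc t)" for t
    using pow_mat_add[OF M, of "2 ^ t" "2 ^ t"] by (metis mult_2 power_Suc)
  have X0: "0 < X" using X by (simp add: X_def)
  have step: "(b t)\<^sup>2 \<le> b (Suc t)" for t
  proof -
    have "(quad_form n (M ^\<^sub>m (2 ^ t)) x)\<^sup>2 \<le> X * quad_form n (M ^\<^sub>m (2 ^ Suc t)) x"
      using quad_form_square_le[OF W, of t x] WW unfolding X_def by simp
    then have "(quad_form n (M ^\<^sub>m (2 ^ t)) x)\<^sup>2 / X\<^sup>2 \<le> X * quad_form n (M ^\<^sub>m (2 ^ Suc t)) x / X\<^sup>2"
      by (rule divide_right_mono) simp
    then show ?thesis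
      using X0 unfolding b_def by (simp add: power_divide power2_eq_square)
  qed
  have top: "b (Suc t) \<le> mat_trace (M ^\<^sub>m (2 ^ Suc t))" for t
    using quad_form_mult_self_le_trace[OF W, of t x] WW X0
    unfolding b_def X_def by (simp add: pos_divide_le_eq)
  have pow_le: "q ^ (2 ^ Suc t) \<le> b (Suc t)" for t
  proof (induction t)
    case 0
    have "\<bar>b 0\<bar> = q" using M X0 unfolding b_def q_def by simp
    then have "q ^ (2 ^ Suc 0) = (b 0)\<^sup>2" by (metis power2_abs power_one_right power_Suc0_right)
    then show ?case using step[of 0] by simp
  next
    case (Suc t)
    have "q ^ (2 ^ Suc (Suc t)) = (q ^ (2 ^ Suc t))\<^sup>2"
      by (simp only: power_Suc[of 2 "Suc t"] mult.commute[of "2::nat"] power_mult)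
    also have "\<dots> \<le> (b (Suc t))\<^sup>2"
      using Suc X0 by (intro power_mono) (auto simp: q_def)
    also have "\<dots> \<le> b (Suc (Suc t))" by (rule step)
    finally show ?case .
  qed
  show ?thesis using order_trans[OF pow_le top] unfolding q_def X_def .
qed

lemma exists_abs_ge_of_power_sums:
  fixes g :: "nat \<Rightarrow> real"
  assumes "0 < L" and le: "\<And>t. q ^ (2 ^ Suc t) \<le> (\<Sum>i\<in>{0..<L}. g i ^ (2 ^ Suc t))"
  shows "\<exists>i<L. q \<le> \<bar>g i\<bar>"
proof (rule ccontr)
  assume "\<not> ?thesis"
  then have less: "\<bar>g i\<bar> < q" if "i < L" for i using that by auto
  then have q: "0 < q" using \<open>0 < L\<close> by (meson abs_ge_zero le_less_trans)
  define p where "p t = (2::nat) ^ Suc t" for t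
  have "strict_mono p" unfolding p_def by (intro strict_monoI) simp
  then have "(\<lambda>t. \<Sum>i\<in>{0..<L}. (g i / q) ^ p t) \<longlonglongrightarrow> 0"
    using less q by (intro tendsto_null_sum LIMSEQ_subseq_LIMSEQ[OF LIMSEQ_power_zero, unfolded o_def])
      auto
  moreover have "1 \<le> (\<Sum>i\<in>{0..<L}. (g i / q) ^ p t)" for t
    using le[of t] q by (simp add: p_def power_divide le_divide_eq flip: sum_divide_distrib)
  ultimately have "1 \<le> (0::real)" by (intro LIMSEQ_le_const) auto
  then show False by simp
qed

lemma exists_abs_eigenvalue_ge_rayleigh:
  assumes M: "M \<in> carrier_mat n n" and sym: "M\<^sup>T = M"
    and trace: "\<And>N. mat_trace (M ^\<^sub>m N) = (\<Sum>i\<in>{0..<n}. g i ^ N)"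
    and X: "0 < (\<Sum>i\<in>{0..<n}. (x i)\<^sup>2)"
  shows "\<exists>i<n. \<bar>quad_form n M x\<bar> / (\<Sum>i\<in>{0..<n}. (x i)\<^sup>2) \<le> \<bar>g i\<bar>"
proof (rule exists_abs_ge_of_power_sums)
  show "0 < n" using X by (cases n) auto
qed (use rayleigh_power_le_trace[OF M sym X] trace in simp)

lemma trace_spectrum_bounds_rayleigh:
  assumes spec: "has_trace_spectrum n M l" and M: "M \<in> carrier_mat n n" and sym: "M\<^sup>T = M"
    and X: "0 < (\<Sum>i\<in>{0..<n}. (x i)\<^sup>2)"
  shows "\<exists>i<n. quad_form n M x / (\<Sum>i\<in>{0..<n}. (x i)\<^sup>2) \<le> l i"
    and "\<exists>i<n. l i \<le> quad_form n M x / (\<Sum>i\<in>{0..<n}. (x i)\<^sup>2)"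
proof -
  define X where "X = (\<Sum>i\<in>{0..<n}. (x i)\<^sup>2)"
  define r where "r = quad_form n M x / X"
  \<comment> \<open>shifting by \<open>\<plusminus>c\<close> makes every \<open>l i \<plusminus> c\<close> of one sign, so the two-sided bound on
    \<open>|l i \<plusminus> c|\<close> becomes one-sided\<close>
  define c where "c = (\<Sum>i\<in>{0..<n}. \<bar>l i\<bar>)"
  have bound: "\<bar>l i\<bar> \<le> c" if "i < n" for i
    unfolding c_def using that by (intro member_le_sum) auto
  have shifted: "\<exists>i<n. \<bar>r + s\<bar> \<le> \<bar>l i + s\<bar>" for s
  proof -
    have Ms: "M + s \<cdot>\<^sub>m 1\<^sub>m n \<in> carrier_mat n n" "(M + s \<cdot>\<^sub>m 1\<^sub>m n)\<^sup>T = M + s \<cdot>\<^sub>m 1\<^sub>m n"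
      using M symmetric_mat_index[OF sym M] by (auto intro!: eq_matI)
    have "\<bar>quad_form n (M + s \<cdot>\<^sub>m 1\<^sub>m n) x\<bar> / X = \<bar>r + s\<bar>"
      using X unfolding quad_form_shift[OF M] r_def X_def by (simp add: field_simps)
    then show ?thesis
      using exists_abs_eigenvalue_ge_rayleigh[OF Ms _ X, of "\<lambda>i. l i + s"] spec
      unfolding has_trace_spectrum_def X_def by simp
  qed
  show "\<exists>i<n. quad_form n M x / (\<Sum>i\<in>{0..<n}. (x i)\<^sup>2) \<le> l i"
    using shifted[of c] bound unfolding r_def X_def by (smt (verit))
  show "\<exists>i<n. l i \<le> quad_form n M x / (\<Sum>i\<in>{0..<n}. (x i)\<^sup>2)"
    using shifted[of "- c"] bound unfolding r_def X_def by (smt (verit))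
qed

section \<open>Adjacency matrices\<close>

definition arcs :: "nat \<Rightarrow> (nat \<Rightarrow> nat \<Rightarrow> bool) \<Rightarrow> (nat \<times> nat) set" where
  "arcs n E = {(i, j) \<in> {0..<n} \<times> {0..<n}. E i j}"

lemma card_arcs_eq_sum:
  "real (card (arcs n E)) = (\<Sum>i\<in>{0..<n}. \<Sum>j\<in>{0..<n}. if E i j then 1 else 0)"
proof -
  have "arcs n E = {p \<in> {0..<n} \<times> {0..<n}. E (fst p) (snd p)}"
    unfolding arcs_def by auto
  then have "real (card (arcs n E)) = (\<Sum>p\<in>{0..<n} \<times> {0..<n}. if E (fst p) (snd p) then 1 else 0)"
    unfolding real_of_card by (simp only:) (rule sum.inter_filter, simp)
  then show ?thesis by (simp add: sum.cartesian_product')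
qed

lemma card_arcs_le:
  assumes "simple_graph n E"
  shows "card (arcs n E) \<le> n * n - n"
proof -
  have "arcs n E \<subseteq> {0..<n} \<times> {0..<n} - (\<lambda>i. (i, i)) ` {0..<n}"
    using assms unfolding arcs_def simple_graph_def by auto
  then have "card (arcs n E) \<le> card ({0..<n} \<times> {0..<n} - (\<lambda>i. (i, i)) ` {0..<n})"
    by (intro card_mono) auto
  also have "\<dots> = n * n - n"
    by (subst card_Diff_subset) (auto simp: card_image inj_on_def)
  finally show ?thesis .
qed

lemma adj_matrix_dims [simp]: "dim_row (adj_matrix n E) = n" "dim_col (adj_matrix n E) = n"
  unfolding adj_matrix_def by simp_all

lemma adj_matrix_carrier [simp]: "adj_matrix n E \<in> carrier_mat n n"
  by (simp add: carrier_matI)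

lemma adj_matrix_index [simp]:
  "i < n \<Longrightarrow> j < n \<Longrightarrow> adj_matrix n E $$ (i,j) = (if E i j then 1 else 0)"
  unfolding adj_matrix_def by simp

lemma adj_matrix_transpose:
  assumes "simple_graph n E"
  shows "(adj_matrix n E)\<^sup>T = adj_matrix n E"
proof -
  have "E i j = E j i" for i j using assms unfolding simple_graph_def by blast
  then show ?thesis by (intro eq_matI) auto
qed

lemma mat_trace_adj_matrix:
  assumes "simple_graph n E"
  shows "mat_trace (adj_matrix n E) = 0"
proof -
  have "\<not> E i i" for i using assms unfolding simple_graph_def by blast
  then show ?thesis unfolding mat_trace_def by simp
qed

lemma mat_trace_adj_matrix_square:
  assumes "simple_graph n E"
  shows "mat_trace (adj_matrix n E * adj_matrix n E) = real (card (arcs n E))"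
proof -
  have sym: "E j i = E i j" for i j using assms unfolding simple_graph_def by blast
  have "mat_trace (adj_matrix n E * adj_matrix n E)
      = (\<Sum>i\<in>{0..<n}. \<Sum>j\<in>{0..<n}. adj_matrix n E $$ (i,j) * adj_matrix n E $$ (j,i))"
    unfolding mat_trace_def by (simp add: scalar_prod_def)
  also have "\<dots> = real (card (arcs n E))"
    unfolding card_arcs_eq_sum by (intro sum.cong refl) (simp add: sym)
  finally show ?thesis .
qed

lemma quad_form_adj_matrix_ones:
  "quad_form n (adj_matrix n E) (\<lambda>_. 1) = real (card (arcs n E))"
  unfolding quad_form_def card_arcs_eq_sum by simp

lemma quad_form_adj_matrix_coloring:
  assumes "\<forall>i<n. \<forall>j<n. E i j \<longrightarrow> f i \<noteq> f j"
  shows "quad_form n (adj_matrix n E) (\<lambda>i. if f i then 1 else -1) = - real (card (arcs n E))"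
proof -
  have "quad_form n (adj_matrix n E) (\<lambda>i. if f i then 1 else -1)
      = (\<Sum>i\<in>{0..<n}. \<Sum>j\<in>{0..<n}. - (if E i j then 1 else 0))"
    unfolding quad_form_def using assms by (intro sum.cong refl) auto
  then show ?thesis unfolding card_arcs_eq_sum by (simp add: sum_negf)
qed

lemma adjacency_trace_spectrum:
  assumes "simple_graph n E"
  obtains l where "estrada_index n E = (\<Sum>i\<in>{0..<n}. exp (l i))"
    and "has_trace_spectrum n (adj_matrix n E) l"
proof -
  obtain l where proots: "eigenvalues_mset (adj_matrix n E) = mset (map (\<lambda>i. of_real (l i)) [0..<n])"
    and spec: "has_trace_spectrum n (adj_matrix n E) l"
    using real_symmetric_trace_spectrum[OF adj_matrix_carrier adj_matrix_transpose[OF assms]]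
    unfolding eigenvalues_mset_def by metis
  have "(\<Sum>z\<in>#eigenvalues_mset (adj_matrix n E). exp z) = of_real (\<Sum>i\<in>{0..<n}. exp (l i))"
    unfolding proots mset_map[symmetric] sum_mset_sum_list
    by (simp add: sum_list_sum_nth atLeast0LessThan exp_of_real)
  then show ?thesis using that spec unfolding estrada_index_def by simp
qed

lemma trace_spectrum_power_sums:
  assumes "has_trace_spectrum n M l" and M: "M \<in> carrier_mat n n"
  shows "(\<Sum>i\<in>{0..<n}. l i) = mat_trace M" and "(\<Sum>i\<in>{0..<n}. (l i)\<^sup>2) = mat_trace (M * M)"
proof -
  have "M + 0 \<cdot>\<^sub>m 1\<^sub>m n = M" using M by (intro eq_matI) auto
  then have "mat_trace (M ^\<^sub>m N) = (\<Sum>i\<in>{0..<n}. l i ^ N)" for N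
    using assms(1)[unfolded has_trace_spectrum_def, rule_format, of 0 N] by simp
  from this[of 1] this[of 2] M show "(\<Sum>i\<in>{0..<n}. l i) = mat_trace M"
    and "(\<Sum>i\<in>{0..<n}. (l i)\<^sup>2) = mat_trace (M * M)"
    by (simp_all add: numeral_2_eq_2)
qed

lemma adjacency_extreme_eigenvalues:
  assumes "simple_graph n E" and spec: "has_trace_spectrum n (adj_matrix n E) l" and "0 < n"
  shows "\<exists>a<n. real (card (arcs n E)) / n \<le> l a"
    and "bipartite n E \<Longrightarrow> \<exists>b<n. l b \<le> - real (card (arcs n E)) / n"
proof -
  note rayleigh = trace_spectrum_bounds_rayleigh[OF spec adj_matrix_carrier adj_matrix_transpose[OF assms(1)]]
  show "\<exists>a<n. real (card (arcs n E)) / n \<le> l a"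
    using rayleigh(1)[of "\<lambda>_. 1"] \<open>0 < n\<close> by (simp add: quad_form_adj_matrix_ones)
  assume "bipartite n E"
  then obtain f :: "nat \<Rightarrow> bool" where f: "\<forall>i<n. \<forall>j<n. E i j \<longrightarrow> f i \<noteq> f j"
    unfolding bipartite_def by blast
  have "(\<Sum>i\<in>{0..<n}. (if f i then 1 else -1 :: real)\<^sup>2) = (\<Sum>i\<in>{0..<n}. 1)"
    by (intro sum.cong) auto
  then show "\<exists>b<n. l b \<le> - real (card (arcs n E)) / n"
    using rayleigh(2)[of "\<lambda>i. if f i then 1 else -1"] \<open>0 < n\<close>
    by (simp add: quad_form_adj_matrix_coloring[OF f])
qed

section \<open>Connected graphs with a cycle\<close>

lemma card_arcs_ge_of_successor:
  assumes "simple_graph n E" and s: "\<And>v. v < n \<Longrightarrow> E v (s v) \<and> s (s v) \<noteq> v"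
  shows "2 * n \<le> card (arcs n E)"
proof -
  define F where "F = (\<lambda>(v, b). if b then (v, s v) else (s v, v))"
  have "s (s v) \<noteq> v" "v \<noteq> s (s v)" if "v < n" for v using s[OF that] by auto
  then have "inj_on F ({0..<n} \<times> UNIV)"
    by (auto simp: F_def inj_on_def split: if_splits)
  moreover have "(v, s v) \<in> arcs n E" "(s v, v) \<in> arcs n E" if "v < n" for v
    using s[OF that] assms(1) that unfolding arcs_def simple_graph_def by auto
  then have "F ` ({0..<n} \<times> UNIV) \<subseteq> arcs n E" by (auto simp: F_def)
  moreover have "finite (arcs n E)"
    by (rule finite_subset[of _ "{0..<n} \<times> {0..<n}"]) (auto simp: arcs_def)
  ultimately have "card ({0..<n} \<times> (UNIV :: bool set)) \<le> card (arcs n E)"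
    by (rule card_inj_on_le)
  then show ?thesis by (simp add: card_cartesian_product mult.commute)
qed

lemma cycle_successor:
  assumes "is_cycle n E vs"
  obtains \<sigma> where "\<And>v. v \<in> set vs \<Longrightarrow> \<sigma> v \<in> set vs \<and> E v (\<sigma> v) \<and> \<sigma> (\<sigma> v) \<noteq> v"
proof -
  define L where "L = length vs"
  have L: "3 \<le> L" and dist: "distinct vs"
    and adj: "\<And>i. i < L \<Longrightarrow> E (vs ! i) (vs ! (Suc i mod L))"
    using assms unfolding is_cycle_def L_def by auto
  define \<sigma> where "\<sigma> v = the (map_of (zip vs (rotate1 vs)) v)" for v
  have \<sigma>: "\<sigma> (vs ! i) = vs ! (Suc i mod L)" if "i < L" for i
    using that dist by (simp add: \<sigma>_def L_def map_of_zip_nth nth_rotate1)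
  have "\<sigma> v \<in> set vs \<and> E v (\<sigma> v) \<and> \<sigma> (\<sigma> v) \<noteq> v" if v: "v \<in> set vs" for v
  proof -
    obtain i where i: "i < L" "v = vs ! i" using v unfolding in_set_conv_nth L_def by blast
    define j where "j = Suc (Suc i mod L) mod L"
    have "j \<noteq> i"
    proof -
      consider "Suc (Suc i) < L" | "Suc (Suc i) = L" | "Suc i = L" using i(1) by linarith
      then show ?thesis using L unfolding j_def by cases (auto simp: mod_Suc_eq)
    qed
    moreover have "j < L" using L unfolding j_def by simp
    moreover have \<sigma>v: "\<sigma> v = vs ! (Suc i mod L)" using \<sigma> i by simp
    moreover have "\<sigma> (\<sigma> v) = vs ! j" unfolding \<sigma>v j_def using L by (simp add: \<sigma>)
    ultimately have "\<sigma> (\<sigma> v) \<noteq> v"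
      using i nth_eq_iff_index_eq[OF dist, of j i] by (simp add: L_def)
    moreover have "Suc i mod L < L" using L by simp
    ultimately show ?thesis using i adj \<sigma>v by (simp add: L_def)
  qed
  then show ?thesis by (rule that)
qed

lemma connected_descent:
  assumes "graph_connected n E" and "c \<in> C" and "c < n"
  obtains d :: "nat \<Rightarrow> nat" and s where "\<And>v. v < n \<Longrightarrow> v \<notin> C \<Longrightarrow> E v (s v) \<and> d (s v) < d v"
proof -
  define d where "d v = (LEAST k. \<exists>c\<in>C. (E ^^ k) v c)" for v
  have down: "\<exists>w. E v w \<and> d w < d v" if v: "v < n" "v \<notin> C" for v
  proof -
    have "E\<^sup>*\<^sup>* v c" using assms v unfolding graph_connected_def by blast
    then obtain k where "(E ^^ k) v c" by (auto simp: rtranclp_power)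
    then have "\<exists>c\<in>C. (E ^^ d v) v c"
      unfolding d_def using LeastI[of "\<lambda>k. \<exists>c\<in>C. (E ^^ k) v c"] \<open>c \<in> C\<close> by blast
    then obtain c' where c': "c' \<in> C" "(E ^^ d v) v c'" by blast
    then obtain k where k: "d v = Suc k" using v by (cases "d v") auto
    then obtain w where w: "E v w" "(E ^^ k) w c'" using c'(2) by (metis relpowp_Suc_D2)
    have "d w \<le> k"
      unfolding d_def using Least_le[of "\<lambda>k. \<exists>c\<in>C. (E ^^ k) w c"] c'(1) w(2) by blast
    then show ?thesis using w k by auto
  qed
  have "E v (SOME w. E v w \<and> d w < d v) \<and> d (SOME w. E v w \<and> d w < d v) < d v"
    if "v < n" "v \<notin> C" for v
    by (rule someI_ex[OF down[OF that]])
  then show ?thesis by (rule that)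
qed

lemma connected_cycle_successor:
  assumes sg: "simple_graph n E" and conn: "graph_connected n E" and cyc: "is_cycle n E vs"
  obtains s where "\<And>v. v < n \<Longrightarrow> E v (s v) \<and> s (s v) \<noteq> v"
proof -
  obtain \<sigma> where \<sigma>: "\<And>v. v \<in> set vs \<Longrightarrow> \<sigma> v \<in> set vs \<and> E v (\<sigma> v) \<and> \<sigma> (\<sigma> v) \<noteq> v"
    using cycle_successor[OF cyc] by blast
  have v0: "vs ! 0 \<in> set vs" using cyc unfolding is_cycle_def by (intro nth_mem) linarith
  then have "vs ! 0 < n" using cyc unfolding is_cycle_def by auto
  then obtain d :: "nat \<Rightarrow> nat" and t
    where t: "\<And>v. v < n \<Longrightarrow> v \<notin> set vs \<Longrightarrow> E v (t v) \<and> d (t v) < d v"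
    using connected_descent[OF conn v0] by blast
  have nbr: "w < n" if "E v w" for v w using sg that unfolding simple_graph_def by blast
  define s where "s v = (if v \<in> set vs then \<sigma> v else t v)" for v
  have "E v (s v) \<and> s (s v) \<noteq> v" if v: "v < n" for v
  proof (cases "v \<in> set vs")
    case True
    then show ?thesis using \<sigma> by (simp add: s_def)
  next
    case False
    note tv = t[OF v False]
    have "s (s v) \<noteq> v"
    proof (cases "t v \<in> set vs")
      case True
      then show ?thesis using \<sigma>[OF True] False by (auto simp: s_def)
    next
      case False
      then show ?thesis
        using tv t[OF nbr[of v] False] \<open>v \<notin> set vs\<close> by (auto simp: s_def)
    qed
    then show ?thesis using tv False by (simp add: s_def)
  qed
  then show ?thesis by (rule that)
qed

lemma card_arcs_ge_of_cycle:
  assumes "simple_graph n E" and "graph_connected n E" and "is_cycle n E vs"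
  shows "2 * n \<le> card (arcs n E)"
proof -
  obtain s where "\<And>v. v < n \<Longrightarrow> E v (s v) \<and> s (s v) \<noteq> v"
    using connected_cycle_successor[OF assms] by blast
  then show ?thesis by (rule card_arcs_ge_of_successor[OF assms(1)])
qed

lemma unicyclic_card_arcs:
  assumes "simple_graph n E" and "unicyclic n E"
  shows "2 * n \<le> card (arcs n E)"
proof -
  have "graph_cycles n E \<noteq> {}" using assms(2) unfolding unicyclic_def by auto
  then obtain vs where "is_cycle n E vs" unfolding graph_cycles_def by auto
  with assms show ?thesis unfolding unicyclic_def by (blast intro: card_arcs_ge_of_cycle)
qed

section \<open>The four-cycle\<close>

lemma sum_atLeast0_lessThan_4: "(\<Sum>i\<in>{0..<4::nat}. g i) = g 0 + g 1 + g 2 + g 3"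
  by (simp add: numeral_eq_Suc)

lemma all_less_4: "(\<forall>i<4::nat. P i) \<longleftrightarrow> P 0 \<and> P 1 \<and> P 2 \<and> P 3"
  by (auto simp: numeral_eq_Suc less_Suc_eq)

lemma card_arcs_isomorphic_C4:
  assumes "isomorphic_C4 n E"
  shows "card (arcs n E) = 8"
proof -
  have n: "n = 4" using assms unfolding isomorphic_C4_def by simp
  obtain p where bij: "bij_betw p {0..<4} {0..<4}" and e: "\<forall>i<4. \<forall>j<4. E i j \<longleftrightarrow> C4 (p i) (p j)"
    using assms unfolding isomorphic_C4_def by auto
  have "real (card (arcs n E)) = (\<Sum>i\<in>{0..<4}. \<Sum>j\<in>{0..<4}. if C4 (p i) (p j) then 1 else 0)"
    unfolding card_arcs_eq_sum n using e by (intro sum.cong refl) auto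
  also have "\<dots> = (\<Sum>i\<in>{0..<4}. \<Sum>j\<in>{0..<4}. if C4 (p i) j then 1 else 0)"
    by (intro sum.cong refl sum.reindex_bij_betw[OF bij])
  also have "\<dots> = (\<Sum>i\<in>{0..<4}. \<Sum>j\<in>{0..<4}. if C4 i j then 1 else 0)"
    by (rule sum.reindex_bij_betw[OF bij, where g = "\<lambda>i. \<Sum>j\<in>{0..<4}. if C4 i j then 1 else 0"])
  also have "\<dots> = 8" by (simp add: sum_atLeast0_lessThan_4 C4_def)
  finally show ?thesis by simp
qed

lemma two_coloured_four_edges_cases:
  fixes e01 e02 e03 e12 e13 e23 f0 f1 f2 f3 :: bool
  assumes "(if e01 then 1 else 0) + (if e02 then 1 else 0) + (if e03 then 1 else 0)
      + (if e12 then 1 else 0) + (if e13 then 1 else 0) + (if e23 then 1 else 0) = (4::real)"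
    and "e01 \<longrightarrow> f0 \<noteq> f1" "e02 \<longrightarrow> f0 \<noteq> f2" "e03 \<longrightarrow> f0 \<noteq> f3"
    and "e12 \<longrightarrow> f1 \<noteq> f2" "e13 \<longrightarrow> f1 \<noteq> f3" "e23 \<longrightarrow> f2 \<noteq> f3"
  shows "e01 \<and> e12 \<and> e23 \<and> e03 \<and> \<not> e02 \<and> \<not> e13
    \<or> e02 \<and> e12 \<and> e13 \<and> e03 \<and> \<not> e01 \<and> \<not> e23
    \<or> e01 \<and> e02 \<and> e13 \<and> e23 \<and> \<not> e03 \<and> \<not> e12"
  using assms by (cases e01; cases e02; cases e03; cases e12; cases e13; cases e23) auto

lemma isomorphic_C4_of_card_arcs:
  assumes sg: "simple_graph 4 E" and bp: "bipartite 4 E" and card: "card (arcs 4 E) = 8"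
  shows "isomorphic_C4 4 E"
proof -
  have sym: "E j i = E i j" and irr: "\<not> E i i" for i j
    using sg unfolding simple_graph_def by blast+
  obtain f :: "nat \<Rightarrow> bool" where f: "\<forall>i<4. \<forall>j<4. E i j \<longrightarrow> f i \<noteq> f j"
    using bp unfolding bipartite_def by blast
  have "real (card (arcs 4 E)) = 8" using card by simp
  then have count: "(if E 0 1 then 1 else 0) + (if E 0 2 then 1 else 0) + (if E 0 3 then 1 else 0)
      + (if E 1 2 then 1 else 0) + (if E 1 3 then 1 else 0) + (if E 2 3 then 1 else 0) = (4::real)"
    unfolding card_arcs_eq_sum by (simp add: sum_atLeast0_lessThan_4 sym irr; linarith)
  define \<tau> :: "nat \<Rightarrow> nat \<Rightarrow> nat \<Rightarrow> nat"
    where "\<tau> a b i = (if i = a then b else if i = b then a else i)" for a b i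
  have "E 0 1 \<and> E 1 2 \<and> E 2 3 \<and> E 0 3 \<and> \<not> E 0 2 \<and> \<not> E 1 3
    \<or> E 0 2 \<and> E 1 2 \<and> E 1 3 \<and> E 0 3 \<and> \<not> E 0 1 \<and> \<not> E 2 3
    \<or> E 0 1 \<and> E 0 2 \<and> E 1 3 \<and> E 2 3 \<and> \<not> E 0 3 \<and> \<not> E 1 2"
    by (rule two_coloured_four_edges_cases[OF count, of "f 0" "f 1" "f 2" "f 3"]) (simp_all add: f)
  then consider (c0123) "E 0 1 \<and> E 1 2 \<and> E 2 3 \<and> E 0 3 \<and> \<not> E 0 2 \<and> \<not> E 1 3"
    | (c0213) "E 0 2 \<and> E 1 2 \<and> E 1 3 \<and> E 0 3 \<and> \<not> E 0 1 \<and> \<not> E 2 3"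
    | (c0132) "E 0 1 \<and> E 0 2 \<and> E 1 3 \<and> E 2 3 \<and> \<not> E 0 3 \<and> \<not> E 1 2"
    by blast
  then obtain a b :: nat where "a < 4" "b < 4"
    and iso: "\<forall>i<4. \<forall>j<4. E i j \<longleftrightarrow> C4 (\<tau> a b i) (\<tau> a b j)"
  proof cases
    case c0123
    then have "\<forall>i<4. \<forall>j<4. E i j \<longleftrightarrow> C4 (\<tau> 0 0 i) (\<tau> 0 0 j)"
      unfolding all_less_4 by (simp add: sym irr C4_def \<tau>_def)
    then show ?thesis using that[of 0 0] by simp
  next
    case c0213
    then have "\<forall>i<4. \<forall>j<4. E i j \<longleftrightarrow> C4 (\<tau> 1 2 i) (\<tau> 1 2 j)"
      unfolding all_less_4 by (simp add: sym irr C4_def \<tau>_def)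
    then show ?thesis using that[of 1 2] by simp
  next
    case c0132
    then have "\<forall>i<4. \<forall>j<4. E i j \<longleftrightarrow> C4 (\<tau> 2 3 i) (\<tau> 2 3 j)"
      unfolding all_less_4 by (simp add: sym irr C4_def \<tau>_def)
    then show ?thesis using that[of 2 3] by simp
  qed
  moreover have "bij_betw (\<tau> a b) {0..<4} {0..<4}"
    using \<open>a < 4\<close> \<open>b < 4\<close> by (intro bij_betwI[where g = "\<tau> a b"]) (auto simp: \<tau>_def)
  ultimately show ?thesis unfolding isomorphic_C4_def by blast
qed

section \<open>The Estrada index bound\<close>

lemma exp_minus_self_ge_tangent:
  fixes a x :: real
  shows "exp a - a + (exp a - 1) * (x - a) \<le> exp x - x"
proof -
  have "exp a * (1 + (x - a)) \<le> exp a * exp (x - a)"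
    by (intro mult_left_mono exp_ge_add_one_self) simp
  then show ?thesis by (simp add: algebra_simps flip: exp_add)
qed

lemma one_plus_less_exp:
  fixes x :: real
  assumes "x \<noteq> 0"
  shows "1 + x < exp x"
proof (cases "0 \<le> 1 + x / 2")
  case True
  have "(1 + x / 2)\<^sup>2 \<le> (exp (x / 2))\<^sup>2"
    using True by (intro power_mono exp_ge_add_one_self)
  also have "(exp (x / 2))\<^sup>2 = exp x" by (simp add: power2_eq_square flip: exp_add)
  finally have "1 + x + x\<^sup>2 / 4 \<le> exp x" by (simp add: power2_eq_square field_simps)
  moreover have "0 < x\<^sup>2" using assms by simp
  ultimately show ?thesis by linarith
next
  case False
  then show ?thesis using exp_gt_zero[of x] by linarith
qed

lemma sum_remove_two:
  assumes "finite A" "a \<in> A" "b \<in> A" "a \<noteq> b"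
  shows "sum f A = f a + f b + sum f (A - {a, b})"
proof -
  have "sum f A = f a + sum f (A - {a})" using assms by (intro sum.remove)
  also have "sum f (A - {a}) = f b + sum f (A - {a} - {b})" using assms by (intro sum.remove) auto
  also have "A - {a} - {b} = A - {a, b}" by auto
  finally show ?thesis by (simp add: add.assoc)
qed

lemma exp_sum_ge_extreme_pair:
  fixes l :: "nat \<Rightarrow> real"
  assumes a: "a < n" and b: "b < n" and la: "2 \<le> l a" and lb: "l b \<le> -2"
    and sum0: "(\<Sum>i\<in>{0..<n}. l i) = 0"
  shows "2 * cosh 2 + (real n - 2) \<le> (\<Sum>i\<in>{0..<n}. exp (l i))"
    and "(\<Sum>i\<in>{0..<n}. exp (l i)) = 2 * cosh 2 + (real n - 2)
      \<longleftrightarrow> l a = 2 \<and> l b = -2 \<and> (\<forall>i\<in>{0..<n} - {a, b}. l i = 0)"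
proof -
  define R where "R = {0..<n} - {a, b}"
  have ab: "a \<noteq> b" using la lb by auto
  have split: "(\<Sum>i\<in>{0..<n}. f i) = f a + f b + (\<Sum>i\<in>R. f i)" for f :: "nat \<Rightarrow> real"
    unfolding R_def using a b ab by (intro sum_remove_two) auto
  have card_R: "real (card R) = real n - 2" unfolding R_def using a b ab by (simp add: card_Diff_subset)
  have cosh_double: "2 * cosh (2::real) = exp 2 + exp (-2)" by (simp add: cosh_def)
  \<comment> \<open>three nonnegative deficits: \<open>exp x - x\<close> against its tangents at \<open>2\<close> and \<open>-2\<close>,
    and \<open>exp x\<close> against \<open>1 + x\<close>\<close>
  define ea where "ea = exp (l a) - l a - (exp 2 - 2)"
  define eb where "eb = exp (l b) - l b - (exp (-2) + 2)"
  define er where "er = (\<Sum>i\<in>R. exp (l i) - 1 - l i)"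
  have excess: "(\<Sum>i\<in>{0..<n}. exp (l i)) - (2 * cosh 2 + (real n - 2)) = ea + eb + er"
    using split[of "\<lambda>i. exp (l i)"] split[of l] sum0 card_R
    unfolding ea_def eb_def er_def by (simp add: sum_subtractf cosh_double)
  have ea: "(exp 2 - 1) * (l a - 2) \<le> ea"
    using exp_minus_self_ge_tangent[of 2 "l a"] unfolding ea_def by simp
  have eb: "(exp (-2) - 1) * (l b + 2) \<le> eb"
    using exp_minus_self_ge_tangent[of "-2" "l b"] unfolding eb_def by simp
  have exp2: "1 < exp (2::real)" and exp_m2: "exp (-2::real) < 1" by simp_all
  have ea0: "0 \<le> (exp 2 - 1) * (l a - 2)" using exp2 la by simp
  have eb0: "0 \<le> (exp (-2) - 1) * (l b + 2)" using exp_m2 lb by (intro mult_nonpos_nonpos) auto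
  have er_terms: "0 \<le> exp (l i) - 1 - l i" for i using exp_ge_add_one_self[of "l i"] by linarith
  then have er0: "0 \<le> er" unfolding er_def by (intro sum_nonneg)
  show "2 * cosh 2 + (real n - 2) \<le> (\<Sum>i\<in>{0..<n}. exp (l i))"
    using excess ea eb ea0 eb0 er0 by linarith
  show "(\<Sum>i\<in>{0..<n}. exp (l i)) = 2 * cosh 2 + (real n - 2)
      \<longleftrightarrow> l a = 2 \<and> l b = -2 \<and> (\<forall>i\<in>{0..<n} - {a, b}. l i = 0)"
  proof
    assume "(\<Sum>i\<in>{0..<n}. exp (l i)) = 2 * cosh 2 + (real n - 2)"
    then have "ea + eb + er = 0" using excess by simp
    then have "(exp 2 - 1) * (l a - 2) = 0" "(exp (-2) - 1) * (l b + 2) = 0" "er = 0"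
      using ea eb ea0 eb0 er0 by linarith+
    moreover have "l i = 0" if "i \<in> R" "er = 0" for i
    proof (rule ccontr)
      assume "l i \<noteq> 0"
      then have "0 < exp (l i) - 1 - l i" using one_plus_less_exp by force
      then have "0 < er" unfolding er_def using that(1) er_terms
        by (intro sum_pos2[where i = i]) (auto simp: R_def)
      then show False using that(2) by simp
    qed
    ultimately show "l a = 2 \<and> l b = -2 \<and> (\<forall>i\<in>{0..<n} - {a, b}. l i = 0)"
      using exp2 exp_m2 unfolding R_def by auto
  next
    assume "l a = 2 \<and> l b = -2 \<and> (\<forall>i\<in>{0..<n} - {a, b}. l i = 0)"
    then have "ea + eb + er = 0" unfolding ea_def eb_def er_def R_def by simp
    then show "(\<Sum>i\<in>{0..<n}. exp (l i)) = 2 * cosh 2 + (real n - 2)" using excess by simp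
  qed
qed

lemma sum_squares_ge_extreme_pair:
  fixes l :: "nat \<Rightarrow> real"
  assumes a: "a < n" and b: "b < n" and la: "2 \<le> l a" and lb: "l b \<le> -2"
  shows "(\<Sum>i\<in>{0..<n}. (l i)\<^sup>2) = 8 \<longleftrightarrow> l a = 2 \<and> l b = -2 \<and> (\<forall>i\<in>{0..<n} - {a, b}. l i = 0)"
proof -
  have "a \<noteq> b" using la lb by auto
  then have split: "(\<Sum>i\<in>{0..<n}. (l i)\<^sup>2) = (l a)\<^sup>2 + (l b)\<^sup>2 + (\<Sum>i\<in>{0..<n} - {a, b}. (l i)\<^sup>2)"
    using a b by (intro sum_remove_two) auto
  have sq: "4 \<le> x\<^sup>2" "x\<^sup>2 = 4 \<Longrightarrow> \<bar>x\<bar> = 2" if "2 \<le> \<bar>x\<bar>" for x :: real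
  proof -
    have "2\<^sup>2 \<le> \<bar>x\<bar>\<^sup>2" using that by (intro power_mono) auto
    then show "4 \<le> x\<^sup>2" by simp
    assume "x\<^sup>2 = 4"
    then have "(\<bar>x\<bar> - 2) * (\<bar>x\<bar> + 2) = 0" by (simp add: algebra_simps power2_eq_square)
    then show "\<bar>x\<bar> = 2" using that by auto
  qed
  have la': "2 \<le> \<bar>l a\<bar>" and lb': "2 \<le> \<bar>l b\<bar>" using la lb by auto
  have rest: "0 \<le> (\<Sum>i\<in>{0..<n} - {a, b}. (l i)\<^sup>2)" by (intro sum_nonneg) simp
  show ?thesis
  proof
    assume "(\<Sum>i\<in>{0..<n}. (l i)\<^sup>2) = 8"
    then have "(l a)\<^sup>2 = 4" "(l b)\<^sup>2 = 4" "(\<Sum>i\<in>{0..<n} - {a, b}. (l i)\<^sup>2) = 0"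
      using split sq(1)[OF la'] sq(1)[OF lb'] rest by linarith+
    then show "l a = 2 \<and> l b = -2 \<and> (\<forall>i\<in>{0..<n} - {a, b}. l i = 0)"
      using sq(2)[OF la'] sq(2)[OF lb'] la lb by (simp add: sum_nonneg_eq_0_iff)
  qed (simp add: split)
qed

lemma card_arcs_eq_8_iff_C4:
  assumes sg: "simple_graph n E" and uc: "unicyclic n E" and bp: "bipartite n E"
  shows "card (arcs n E) = 8 \<longleftrightarrow> isomorphic_C4 n E"
proof
  assume card: "card (arcs n E) = 8"
  then have "n \<le> 4" using unicyclic_card_arcs[OF sg uc] by simp
  moreover have "\<not> n \<le> 3"
  proof
    assume "n \<le> 3"
    then have "n * (n - 1) \<le> 3 * 2" by (intro mult_le_mono) auto
    then show False using card_arcs_le[OF sg] card by (simp add: diff_mult_distrib2)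
  qed
  ultimately have "n = 4" by simp
  then show "isomorphic_C4 n E" using isomorphic_C4_of_card_arcs sg bp card by simp
qed (rule card_arcs_isomorphic_C4)

theorem mainTheorem13:
  fixes n :: nat and E :: "nat \<Rightarrow> nat \<Rightarrow> bool"
  assumes "simple_graph n E" and "unicyclic n E" and "bipartite n E"
  shows "estrada_index n E \<ge> 2 * cosh 2 + (real n - 2)
    \<and> (estrada_index n E = 2 * cosh 2 + (real n - 2) \<longleftrightarrow> isomorphic_C4 n E)"
proof -
  note sg = assms(1) and uc = assms(2) and bp = assms(3)
  have n0: "0 < n" using uc unfolding unicyclic_def graph_connected_def by simp
  obtain l where EE: "estrada_index n E = (\<Sum>i\<in>{0..<n}. exp (l i))"
    and spec: "has_trace_spectrum n (adj_matrix n E) l"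
    using adjacency_trace_spectrum[OF sg] by blast
  have sum0: "(\<Sum>i\<in>{0..<n}. l i) = 0" and sum_sq: "(\<Sum>i\<in>{0..<n}. (l i)\<^sup>2) = card (arcs n E)"
    using trace_spectrum_power_sums[OF spec adj_matrix_carrier]
    by (simp_all add: mat_trace_adj_matrix[OF sg] mat_trace_adj_matrix_square[OF sg])
  have avg: "2 \<le> real (card (arcs n E)) / n"
    using unicyclic_card_arcs[OF sg uc] n0 by (simp add: le_divide_eq)
  obtain a where a: "a < n" "2 \<le> l a"
    using adjacency_extreme_eigenvalues(1)[OF sg spec n0] avg by force
  obtain b where b: "b < n" "l b \<le> -2"
    using adjacency_extreme_eigenvalues(2)[OF sg spec n0 bp] avg by force
  note bound = exp_sum_ge_extreme_pair[OF a(1) b(1) a(2) b(2) sum0]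
  have "estrada_index n E = 2 * cosh 2 + (real n - 2) \<longleftrightarrow> (\<Sum>i\<in>{0..<n}. (l i)\<^sup>2) = 8"
    unfolding EE bound(2) sum_squares_ge_extreme_pair[OF a(1) b(1) a(2) b(2)] ..
  also have "\<dots> \<longleftrightarrow> isomorphic_C4 n E"
    unfolding sum_sq card_arcs_eq_8_iff_C4[OF sg uc bp, symmetric] by linarith
  finally show ?thesis using bound(1) EE by simp
qed

end
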